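(* Let $n\ge1$ be an integer and $\beta>0$, $J>0$, $H\in\mathbb{R}$. Let $P=S_3(123,321)=\{132,213,231,312\}\subset S_3$. For $\pi\in S_3$ let $\mathrm{CDdes}(\pi)=\mathrm{des}(\pi)+\mathrm{des}(\pi^{-1})$, where $\mathrm{des}(\pi)$ is the number of $i\in\{1,2\}$ with $\pi(i)>\pi(i+1)$; put $\phi(\alpha,\sigma)=1-\tfrac12\mathrm{CDdes}(\alpha^{-1}\sigma)$ and $\phi(\pi)=1-\tfrac12\mathrm{CDdes}(\pi)$. For $\vec\pi=(\pi^{(1)},\ldots,\pi^{(n)})\in P^n$ with $\pi^{(n+1)}:=\pi^{(1)}$, let $\mathcal{H}(\vec\pi)=-J\sum_{i=1}^n\phi(\pi^{(i)},\pi^{(i+1)})-H\sum_{i=1}^n\phi(\pi^{(i)})$ and $Z_n(\beta)=\sum_{\vec\pi\in P^n}\exp(-\beta\mathcal{H}(\vec\pi))$. Then $$Z_n(\beta)=e^{\beta Jn}\left(2(1-e^{-\beta J})^{n}(1+e^{-\beta J})^{n}+(1-e^{-\beta J})^{2n}+(1+e^{-\beta J})^{2n}\right),$$ and the free energy $f(\beta):=-\lim_{n\to\infty}\frac{1}{\beta n}\ln Z_n(\beta)$ equals $$f(\beta)=-J-\frac{2}{\beta}\ln\left(1+e^{-\beta J}\right).$$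
   Context: Permutations of $\{1,2,3\}$ are written in one-line notation $\pi(1)\pi(2)\pi(3)$ and composed as functions, $(\alpha^{-1}\sigma)(x)=\alpha^{-1}(\sigma(x))$. This is the 1D 3-permaspin model on a ring of $n$ sites with permaspins restricted to $P$, in an external field $H$. *)

theory Defs
  imports Complex_Main
begin

text \<open>Permutations of {1,2,3} are functions nat => nat permuting {1,2,3} and fixing
everything else. perm_of_list [a,b,c] is the permutation with one-line notation abc.\<close>

definition perm_of_list :: "nat list \<Rightarrow> (nat \<Rightarrow> nat)" where
  "perm_of_list l = (\<lambda>x. if x \<in> {1,2,3} then l ! (x - 1) else x)"

definition P :: "(nat \<Rightarrow> nat) set" where
  "P = {perm_of_list [1,3,2], perm_of_list [2,1,3], perm_of_list [2,3,1], perm_of_list [3,1,2]}"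

definition des :: "(nat \<Rightarrow> nat) \<Rightarrow> nat" where
  "des \<pi> = card {i \<in> {1::nat,2}. \<pi> i > \<pi> (i + 1)}"

definition CDdes :: "(nat \<Rightarrow> nat) \<Rightarrow> nat" where
  "CDdes \<pi> = des \<pi> + des (inv \<pi>)"

definition phi1 :: "(nat \<Rightarrow> nat) \<Rightarrow> real" where
  "phi1 \<pi> = 1 - real (CDdes \<pi>) / 2"

definition phi2 :: "(nat \<Rightarrow> nat) \<Rightarrow> (nat \<Rightarrow> nat) \<Rightarrow> real" where
  "phi2 \<alpha> \<sigma> = 1 - real (CDdes (inv \<alpha> \<circ> \<sigma>)) / 2"

text \<open>Configurations on the ring: lists of length n with entries in P; site i+1 is
list index i, and pi^(n+1) = pi^(1) via index (i+1) mod n.\<close>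
definition configs :: "nat \<Rightarrow> (nat \<Rightarrow> nat) list set" where
  "configs n = {xs. length xs = n \<and> set xs \<subseteq> P}"

definition hamiltonian :: "real \<Rightarrow> real \<Rightarrow> (nat \<Rightarrow> nat) list \<Rightarrow> real" where
  "hamiltonian J H xs =
     - J * (\<Sum>i<length xs. phi2 (xs ! i) (xs ! ((i + 1) mod length xs)))
     - H * (\<Sum>i<length xs. phi1 (xs ! i))"

definition Z :: "real \<Rightarrow> real \<Rightarrow> nat \<Rightarrow> real \<Rightarrow> real" where
  "Z J H n \<beta> = (\<Sum>xs\<in>configs n. exp (- \<beta> * hamiltonian J H xs))"

end

theory Submission
  imports Defs
begin

(*
  Encode the four permaspins of P by pairs of Ising spins (perm_of_spins): for alpha, sigma in P,
  CDdes (alpha^-1 sigma) is twice the Hamming distance of their spin pairs, and CDdes = 2 on P,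
  so the field term vanishes and the model is a ring of spin pairs with transfer weight
  x ^ (Hamming distance), x = exp (- beta J), up to the factor exp (beta J) per bond.
  The characters of Z_2 x Z_2 diagonalise this 4 x 4 transfer matrix with eigenvalues
  (1 +- x)(1 +- x), so Z_n = exp (beta J n) ((1 + x)^n + (1 - x)^n)^2, and the free energy is
  governed by the dominant eigenvalue (1 + x)^2.
*)

fun walk_weight :: "('a \<Rightarrow> 'a \<Rightarrow> 'b::monoid_mult) \<Rightarrow> 'a \<Rightarrow> 'a list \<Rightarrow> 'a \<Rightarrow> 'b" where
  "walk_weight f a [] b = f a b"
| "walk_weight f a (c # l) b = f a c * walk_weight f c l b"

lemma sum_lists_length_Suc:
  fixes g :: "'a::finite list \<Rightarrow> 'b::comm_monoid_add"
  shows "(\<Sum>l | length l = Suc m. g l) = (\<Sum>c\<in>UNIV. \<Sum>l | length l = m. g (c # l))"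
proof -
  have lists: "{l. length l = Suc m} = (\<lambda>(c, l). c # l) ` (UNIV \<times> {l. length l = m})"
    by (auto simp: length_Suc_conv)
  have "inj_on (\<lambda>(c, l). c # l) (UNIV \<times> {l :: 'a list. length l = m})"
    by (auto simp: inj_on_def)
  then show ?thesis
    unfolding lists by (simp add: sum.reindex sum.cartesian_product prod.case_distrib)
qed

lemma sum_walk_weight_spectral:
  fixes f :: "'a::finite \<Rightarrow> 'a \<Rightarrow> 'b::comm_semiring_1" and lam :: "'k::finite \<Rightarrow> 'b"
  assumes decomp: "\<And>a b. f a b = (\<Sum>k\<in>UNIV. lam k * u k a * v k b)"
    and biorth: "\<And>j k. (\<Sum>c\<in>UNIV. v j c * u k c) = (if j = k then 1 else 0)"
  shows "(\<Sum>l | length l = m. walk_weight f a l b) = (\<Sum>k\<in>UNIV. lam k ^ Suc m * u k a * v k b)"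
proof (induction m arbitrary: a)
  case 0
  then show ?case by (simp add: decomp)
next
  case (Suc m)
  have "(\<Sum>l | length l = Suc m. walk_weight f a l b)
      = (\<Sum>c\<in>UNIV. (\<Sum>j\<in>UNIV. lam j * u j a * v j c)
                     * (\<Sum>k\<in>UNIV. lam k ^ Suc m * u k c * v k b))"
    by (simp only: sum_lists_length_Suc walk_weight.simps flip: sum_distrib_left)
      (simp add: Suc.IH decomp)
  also have "\<dots> = (\<Sum>c\<in>UNIV. \<Sum>j\<in>UNIV. \<Sum>k\<in>UNIV.
                      lam j * lam k ^ Suc m * u j a * v k b * (v j c * u k c))"
    by (simp only: sum_product) (simp only: ac_simps)
  also have "\<dots> = (\<Sum>j\<in>UNIV. \<Sum>k\<in>UNIV. \<Sum>c\<in>UNIV.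
                      lam j * lam k ^ Suc m * u j a * v k b * (v j c * u k c))"
    by (subst sum.swap) (rule sum.cong[OF refl], rule sum.swap)
  also have "\<dots> = (\<Sum>j\<in>UNIV. \<Sum>k\<in>UNIV.
                      lam j * lam k ^ Suc m * u j a * v k b * (\<Sum>c\<in>UNIV. v j c * u k c))"
    by (simp only: sum_distrib_left)
  also have "\<dots> = (\<Sum>k\<in>UNIV. lam k ^ Suc (Suc m) * u k a * v k b)"
    by (simp only: biorth) (simp add: if_distrib[of "times _"] ac_simps cong: if_cong)
  finally show ?case .
qed

lemma walk_weight_eq_prod:
  "walk_weight f a l b = (\<Prod>i<Suc (length l). f ((a # l) ! i) ((l @ [b]) ! i))"
  by (induction l arbitrary: a) (simp_all add: prod.lessThan_Suc_shift del: prod.lessThan_Suc)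

lemma sum_cyclic_prod_spectral:
  fixes f :: "'a::finite \<Rightarrow> 'a \<Rightarrow> 'b::comm_semiring_1" and lam :: "'k::finite \<Rightarrow> 'b"
  assumes decomp: "\<And>a b. f a b = (\<Sum>k\<in>UNIV. lam k * u k a * v k b)"
    and biorth: "\<And>j k. (\<Sum>c\<in>UNIV. v j c * u k c) = (if j = k then 1 else 0)"
    and "0 < n"
  shows "(\<Sum>xs | length xs = n. \<Prod>i<n. f (xs ! i) (xs ! ((i + 1) mod n))) = (\<Sum>k\<in>UNIV. lam k ^ n)"
proof -
  obtain m where n: "n = Suc m"
    using \<open>0 < n\<close> gr0_implies_Suc by blast
  have cyclic_walk: "(\<Prod>i<n. f ((a # l) ! i) ((a # l) ! ((i + 1) mod n))) = walk_weight f a l a"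
    if "length l = m" for a l
  proof -
    have "(a # l) ! ((i + 1) mod n) = (l @ [a]) ! i" if "i < n" for i
      using nth_rotate1[of i "a # l"] that \<open>length l = m\<close> n by simp
    then show ?thesis
      using \<open>length l = m\<close> n by (simp add: walk_weight_eq_prod del: prod.lessThan_Suc)
  qed
  have "(\<Sum>xs | length xs = n. \<Prod>i<n. f (xs ! i) (xs ! ((i + 1) mod n)))
      = (\<Sum>a\<in>UNIV. \<Sum>l | length l = m. walk_weight f a l a)"
    unfolding n sum_lists_length_Suc by (intro sum.cong refl cyclic_walk[unfolded n]) simp
  also have "\<dots> = (\<Sum>a\<in>UNIV. \<Sum>k\<in>UNIV. lam k ^ n * (v k a * u k a))"
    by (simp add: sum_walk_weight_spectral[OF decomp biorth] n ac_simps)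
  also have "\<dots> = (\<Sum>k\<in>UNIV. lam k ^ n)"
    by (subst sum.swap) (simp add: biorth flip: sum_distrib_left)
  finally show ?thesis .
qed

lemma power_add_power_pos:
  fixes a b :: real
  assumes "\<bar>b\<bar> < a"
  shows "0 < a ^ n + b ^ n"
proof (cases "n = 0")
  case False
  then have "\<bar>b\<bar> ^ n < a ^ n"
    using assms by (simp add: power_strict_mono)
  moreover have "- (b ^ n) \<le> \<bar>b\<bar> ^ n"
    by (metis abs_ge_minus_self power_abs)
  ultimately show ?thesis
    by linarith
qed simp

lemma ln_power_add_power_div_tendsto:
  fixes a b :: real
  assumes "\<bar>b\<bar> < a"
  shows "(\<lambda>n. ln (a ^ n + b ^ n) / real n) \<longlonglongrightarrow> ln a"
proof -
  define r where "r = b / a"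
  have "0 < a"
    using assms by linarith
  have "\<bar>r\<bar> < 1"
    using assms \<open>0 < a\<close> by (simp add: r_def abs_divide)
  have log_split: "ln (a ^ n + b ^ n) / real n = ln a + ln (1 + r ^ n) / real n" if "0 < n" for n
  proof -
    have factor: "a ^ n + b ^ n = a ^ n * (1 + r ^ n)"
      using \<open>0 < a\<close> by (simp add: r_def power_divide distrib_left)
    have "0 < 1 + r ^ n"
      using power_add_power_pos[OF \<open>\<bar>r\<bar> < 1\<close>, of n] by simp
    then have "ln (a ^ n + b ^ n) = real n * ln a + ln (1 + r ^ n)"
      unfolding factor using \<open>0 < a\<close> by (simp add: ln_mult ln_realpow)
    then show ?thesis
      using that by (simp add: add_divide_distrib)
  qed
  have "(\<lambda>n. r ^ n) \<longlonglongrightarrow> 0"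
    using \<open>\<bar>r\<bar> < 1\<close> by (intro LIMSEQ_power_zero) simp
  then have "(\<lambda>n. ln (1 + r ^ n)) \<longlonglongrightarrow> ln (1 + 0)"
    by (intro tendsto_ln tendsto_add tendsto_const) simp_all
  then have "(\<lambda>n. ln (1 + r ^ n) / real n) \<longlonglongrightarrow> 0"
    by (rule tendsto_divide_0) (rule filterlim_at_top_imp_at_infinity[OF filterlim_real_sequentially])
  then have "(\<lambda>n. ln a + ln (1 + r ^ n) / real n) \<longlonglongrightarrow> ln a + 0"
    by (intro tendsto_add tendsto_const)
  moreover have "\<forall>\<^sub>F n in sequentially. ln a + ln (1 + r ^ n) / real n = ln (a ^ n + b ^ n) / real n"
    using eventually_gt_at_top[of 0] by eventually_elim (rule log_split[symmetric])
  ultimately have "(\<lambda>n. ln (a ^ n + b ^ n) / real n) \<longlonglongrightarrow> ln a + 0"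
    by (rule Lim_transform_eventually)
  then show ?thesis
    by simp
qed

lemma perm_of_list_apply:
  "perm_of_list [a, b, c] x = (if x = 1 then a else if x = 2 then b else if x = 3 then c else x)"
  by (simp add: perm_of_list_def)

lemma des_eq_of_bool: "des \<pi> = of_bool (\<pi> 2 < \<pi> 1) + of_bool (\<pi> 3 < \<pi> 2)"
proof -
  have "{i \<in> {1, 2}. \<pi> (i + 1) < \<pi> i}
      = (if \<pi> 2 < \<pi> 1 then {1} else {}) \<union> (if \<pi> 3 < \<pi> 2 then {2} else {})"
    by (auto simp: numeral_2_eq_2 numeral_3_eq_3)
  then show ?thesis
    by (simp add: des_def)
qed

lemma CDdes_inv_comp:
  assumes "bij \<alpha>" and "bij \<sigma>"
  shows "CDdes (inv \<alpha> \<circ> \<sigma>) = des (inv \<alpha> \<circ> \<sigma>) + des (inv \<sigma> \<circ> \<alpha>)"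
  using assms by (simp add: CDdes_def o_inv_distrib bij_imp_bij_inv inv_inv_eq)

fun perm_of_spins :: "bool \<times> bool \<Rightarrow> nat \<Rightarrow> nat" where
  "perm_of_spins (False, False) = perm_of_list [1, 3, 2]"
| "perm_of_spins (False, True) = perm_of_list [2, 1, 3]"
| "perm_of_spins (True, False) = perm_of_list [3, 1, 2]"
| "perm_of_spins (True, True) = perm_of_list [2, 3, 1]"

lemma perm_of_spins_flip_comp:
  "perm_of_spins (s, s \<noteq> t) \<circ> perm_of_spins (s, t) = id"
  "perm_of_spins (s, t) \<circ> perm_of_spins (s, s \<noteq> t) = id"
  by (cases s; cases t; auto simp: fun_eq_iff perm_of_list_apply)+

lemma bij_perm_of_spins: "bij (perm_of_spins p)"
  using perm_of_spins_flip_comp[of "fst p" "snd p"] by (intro o_bij) auto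

lemma inv_perm_of_spins: "inv (perm_of_spins (s, t)) = perm_of_spins (s, s \<noteq> t)"
  by (rule inv_unique_comp[OF perm_of_spins_flip_comp(2,1)])

lemma phi1_perm_of_spins: "phi1 (perm_of_spins p) = 0"
proof -
  obtain s t where p: "p = (s, t)"
    by fastforce
  show ?thesis
    unfolding p phi1_def CDdes_def inv_perm_of_spins
    by (cases s; cases t) (simp_all add: des_eq_of_bool perm_of_list_apply)
qed

definition hamming_dist :: "bool \<times> bool \<Rightarrow> bool \<times> bool \<Rightarrow> nat" where
  "hamming_dist p q = of_bool (fst p \<noteq> fst q) + of_bool (snd p \<noteq> snd q)"

lemma phi2_perm_of_spins:
  "phi2 (perm_of_spins p) (perm_of_spins q) = 1 - real (hamming_dist p q)"
proof -
  obtain s t s' t' where pq: "p = (s, t)" "q = (s', t')"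
    by fastforce
  show ?thesis
    unfolding pq phi2_def CDdes_inv_comp[OF bij_perm_of_spins bij_perm_of_spins]
    unfolding inv_perm_of_spins
    by (cases s; cases t; cases s'; cases t')
      (simp_all add: des_eq_of_bool perm_of_list_apply hamming_dist_def)
qed

lemma inj_perm_of_spins: "inj perm_of_spins"
proof (rule injI)
  fix p q
  assume "perm_of_spins p = perm_of_spins q"
  then have "perm_of_spins p 1 = perm_of_spins q 1" "perm_of_spins p 2 = perm_of_spins q 2"
    by simp_all
  then show "p = q"
    by (cases p rule: perm_of_spins.cases; cases q rule: perm_of_spins.cases)
      (simp_all add: perm_of_list_apply)
qed

lemma UNIV_bool_pair:
  "(UNIV :: (bool \<times> bool) set) = {(False, False), (False, True), (True, False), (True, True)}"
  by auto

lemma P_eq_range_perm_of_spins: "P = range perm_of_spins"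
  unfolding P_def UNIV_bool_pair by (simp add: insert_commute)

lemma configs_eq_map_perm_of_spins: "configs n = map perm_of_spins ` {ys. length ys = n}"
proof
  show "configs n \<subseteq> map perm_of_spins ` {ys. length ys = n}"
  proof
    fix xs
    assume "xs \<in> configs n"
    then have "length xs = n" "set xs \<subseteq> range perm_of_spins"
      by (auto simp: configs_def P_eq_range_perm_of_spins)
    moreover obtain ys where "xs = map perm_of_spins ys"
      using ex_map_conv[of xs perm_of_spins] \<open>set xs \<subseteq> range perm_of_spins\<close> by blast
    ultimately show "xs \<in> map perm_of_spins ` {ys. length ys = n}"
      by auto
  qed
qed (auto simp: configs_def P_eq_range_perm_of_spins)

definition character :: "bool \<times> bool \<Rightarrow> bool \<times> bool \<Rightarrow> real" where
  "character k a = (if fst k \<and> fst a then -1 else 1) * (if snd k \<and> snd a then -1 else 1)"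

definition transfer_eigenvalue :: "real \<Rightarrow> bool \<times> bool \<Rightarrow> real" where
  "transfer_eigenvalue x k = (if fst k then 1 - x else 1 + x) * (if snd k then 1 - x else 1 + x)"

lemma sum_UNIV_bool_pair:
  "(\<Sum>p\<in>UNIV. f p) = f (False, False) + f (False, True) + f (True, False) + f (True, True)"
  unfolding UNIV_bool_pair by (simp add: add.assoc)

lemma power_hamming_dist_expansion:
  "x ^ hamming_dist a b = (\<Sum>k\<in>UNIV. transfer_eigenvalue x k * (character k a / 4) * character k b)"
proof -
  obtain s t s' t' where ab: "a = (s, t)" "b = (s', t')"
    by fastforce
  show ?thesis
    unfolding ab sum_UNIV_bool_pair hamming_dist_def transfer_eigenvalue_def character_def
    by (cases s; cases t; cases s'; cases t') (simp_all add: field_simps power2_eq_square)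
qed

lemma character_orthogonal:
  "(\<Sum>c\<in>UNIV. character j c * (character k c / 4)) = (if j = k then 1 else 0)"
proof -
  obtain s t s' t' where jk: "j = (s, t)" "k = (s', t')"
    by fastforce
  show ?thesis
    unfolding jk sum_UNIV_bool_pair character_def
    by (cases s; cases t; cases s'; cases t') simp_all
qed

lemma exp_hamiltonian_perm_of_spins:
  assumes "ys \<noteq> []"
  shows "exp (- \<beta> * hamiltonian J H (map perm_of_spins ys))
     = exp (\<beta> * J) ^ length ys
       * (\<Prod>i<length ys. exp (- \<beta> * J) ^ hamming_dist (ys ! i) (ys ! ((i + 1) mod length ys)))"
proof -
  have "hamiltonian J H (map perm_of_spins ys)
      = - J * (\<Sum>i<length ys. 1 - real (hamming_dist (ys ! i) (ys ! ((i + 1) mod length ys))))"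
    using assms by (simp add: hamiltonian_def phi1_perm_of_spins phi2_perm_of_spins)
  then have "exp (- \<beta> * hamiltonian J H (map perm_of_spins ys))
      = (\<Prod>i<length ys. exp (\<beta> * J * (1 - real (hamming_dist (ys ! i) (ys ! ((i + 1) mod length ys))))))"
    by (simp add: sum_distrib_left exp_sum mult.assoc)
  moreover have "exp (\<beta> * J * (1 - real d)) = exp (\<beta> * J) * exp (- \<beta> * J) ^ d" for d
    by (simp add: algebra_simps flip: exp_of_nat_mult exp_add)
  ultimately show ?thesis
    by (simp add: prod.distrib)
qed

lemma Z_closed_form:
  assumes "0 < n"
  shows "Z J H n \<beta> = exp (\<beta> * J * real n)
           * ((1 + exp (- \<beta> * J)) ^ n + (1 - exp (- \<beta> * J)) ^ n)\<^sup>2"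
proof -
  define x where "x = exp (- \<beta> * J)"
  have "Z J H n \<beta> = (\<Sum>ys | length ys = n. exp (- \<beta> * hamiltonian J H (map perm_of_spins ys)))"
    unfolding Z_def configs_eq_map_perm_of_spins
    by (subst sum.reindex) (auto intro: inj_on_subset[OF inj_mapI[OF inj_perm_of_spins]])
  also have "\<dots> = exp (\<beta> * J) ^ n
      * (\<Sum>ys | length ys = n. \<Prod>i<n. x ^ hamming_dist (ys ! i) (ys ! ((i + 1) mod n)))"
    unfolding sum_distrib_left x_def
    using \<open>0 < n\<close>
    by (intro sum.cong refl) (auto simp: exp_hamiltonian_perm_of_spins simp del: mult_minus_left)
  also have "\<dots> = exp (\<beta> * J) ^ n * (\<Sum>k\<in>UNIV. transfer_eigenvalue x k ^ n)"
    using sum_cyclic_prod_spectral[OF power_hamming_dist_expansion character_orthogonal \<open>0 < n\<close>] by simp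
  also have "\<dots> = exp (\<beta> * J * real n) * ((1 + x) ^ n + (1 - x) ^ n)\<^sup>2"
    by (simp add: sum_UNIV_bool_pair transfer_eigenvalue_def power_mult_distrib power2_eq_square algebra_simps
        flip: exp_of_nat_mult)
  finally show ?thesis
    unfolding x_def .
qed

lemma abs_one_minus_exp_less: "\<bar>1 - exp x\<bar> < 1 + exp (x :: real)"
  by (simp add: abs_less_iff)

lemma free_energy_eq:
  assumes "\<beta> \<noteq> 0" and "0 < n"
  shows "- (1 / (\<beta> * real n)) * ln (Z J H n \<beta>)
    = - J - (2 / \<beta>) * (ln ((1 + exp (- \<beta> * J)) ^ n + (1 - exp (- \<beta> * J)) ^ n) / real n)"
proof -
  have "0 < (1 + exp (- \<beta> * J)) ^ n + (1 - exp (- \<beta> * J)) ^ n"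
    by (rule power_add_power_pos[OF abs_one_minus_exp_less])
  then have "ln (Z J H n \<beta>)
      = \<beta> * J * real n + 2 * ln ((1 + exp (- \<beta> * J)) ^ n + (1 - exp (- \<beta> * J)) ^ n)"
    using Z_closed_form[OF \<open>0 < n\<close>] by (simp add: ln_mult ln_realpow)
  then show ?thesis
    using assms by (simp add: field_simps)
qed

theorem theorem3:
  fixes \<beta> J H :: real
  assumes "\<beta> > 0" and "J > 0"
  shows "(\<forall>n::nat. n \<ge> 1 \<longrightarrow>
           Z J H n \<beta> = exp (\<beta> * J * real n) *
             (2 * (1 - exp (- \<beta> * J)) ^ n * (1 + exp (- \<beta> * J)) ^ n
              + (1 - exp (- \<beta> * J)) ^ (2 * n) + (1 + exp (- \<beta> * J)) ^ (2 * n)))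
       \<and> ((\<lambda>n. - (1 / (\<beta> * real n)) * ln (Z J H n \<beta>))
            \<longlonglongrightarrow> - J - (2 / \<beta>) * ln (1 + exp (- \<beta> * J)))"
proof
  let ?x = "exp (- \<beta> * J)"
  have square: "(a + b)\<^sup>2 = 2 * b * a + b\<^sup>2 + a\<^sup>2" for a b :: real
    by (simp add: power2_sum)
  show "\<forall>n::nat. n \<ge> 1 \<longrightarrow> Z J H n \<beta> = exp (\<beta> * J * real n) *
      (2 * (1 - ?x) ^ n * (1 + ?x) ^ n + (1 - ?x) ^ (2 * n) + (1 + ?x) ^ (2 * n))"
    using Z_closed_form[of _ J H \<beta>] unfolding square power_even_eq by simp
  have "(\<lambda>n. - J - (2 / \<beta>) * (ln ((1 + ?x) ^ n + (1 - ?x) ^ n) / real n))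
      \<longlonglongrightarrow> - J - (2 / \<beta>) * ln (1 + ?x)"
    by (intro tendsto_intros ln_power_add_power_div_tendsto abs_one_minus_exp_less)
  moreover have "\<forall>\<^sub>F n in sequentially. - J - (2 / \<beta>) * (ln ((1 + ?x) ^ n + (1 - ?x) ^ n) / real n)
      = - (1 / (\<beta> * real n)) * ln (Z J H n \<beta>)"
    using eventually_gt_at_top[of 0]
    by eventually_elim (rule free_energy_eq[symmetric], use \<open>\<beta> > 0\<close> in auto)
  ultimately show "(\<lambda>n. - (1 / (\<beta> * real n)) * ln (Z J H n \<beta>))
      \<longlonglongrightarrow> - J - (2 / \<beta>) * ln (1 + ?x)"
    by (rule Lim_transform_eventually)
qed

end
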